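(* Let $p$ and $q$ be probability distributions on a countable set $\mathcal{A}$ with $\mathrm{dist}(p,q)\le\epsilon$. Let $N\ge1$ be an integer and let $p^N,q^N$ be the product distributions on $\mathcal{A}^N$ (i.i.d. sampling from $p$, resp. $q$). For any $R_N\subset\mathcal{A}^N$ and $\alpha>0$, if $p^N(R_N)\ge1-\alpha$, then \[q^N(R_N)\ge 1-\alpha-2N^3\sqrt{4\epsilon\ln 2}-\frac1N.\]
   Context: $D(p\|q)=\sum_y p(y)\log_2\frac{p(y)}{q(y)}$ and $\mathrm{dist}(p,q):=D(p\|\frac{p+q}{2})+D(q\|\frac{p+q}{2})$. *)

theory Defs
  imports "HOL-Probability.Probability"
begin

definition KL_div :: "'a pmf \<Rightarrow> 'a pmf \<Rightarrow> real" where
  "KL_div p q = (\<Sum>\<^sub>\<infinity>y\<in>UNIV. (if pmf p y = 0 then 0 else pmf p y * log 2 (pmf p y / pmf q y)))"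

definition mid_pmf :: "'a pmf \<Rightarrow> 'a pmf \<Rightarrow> 'a pmf" where
  "mid_pmf p q = bind_pmf (bernoulli_pmf (1/2)) (\<lambda>b. if b then p else q)"

definition JS_dist :: "'a pmf \<Rightarrow> 'a pmf \<Rightarrow> real" where
  "JS_dist p q = KL_div p (mid_pmf p q) + KL_div q (mid_pmf p q)"

end

theory Submission
  imports Defs
begin

text \<open>
  Changing the coordinates of a sample from \<open>p\<^sup>N\<close> into samples from \<open>q\<close> one at a time (a
  hybrid argument) moves the probability of any event by at most the \<open>l\<^sup>1\<close> distance
  \<open>\<parallel>p - q\<parallel>\<^sub>1\<close> per coordinate, so \<open>|p\<^sup>N(R) - q\<^sup>N(R)| \<le> N \<parallel>p - q\<parallel>\<^sub>1\<close>.
  On the other hand \<open>ln t \<le> t - 1\<close> shows that \<open>ln 2 \<cdot> dist(p,q)\<close> dominates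
  \<open>\<Sum>(\<surd>p - \<surd>q)\<^sup>2 / 2\<close>, and writing \<open>|p - q| = |\<surd>p - \<surd>q| (\<surd>p + \<surd>q)\<close> and
  applying AM-GM with a free weight gives \<open>\<parallel>p - q\<parallel>\<^sub>1 \<le> 3 \<surd>(ln 2 \<cdot> dist(p,q))\<close>.
  The stated bound is a weakening of \<open>3 N \<surd>(\<epsilon> ln 2)\<close>.
\<close>

definition pmf_l1_dist :: "'a pmf \<Rightarrow> 'a pmf \<Rightarrow> real" where
  "pmf_l1_dist p q = (\<Sum>\<^sub>\<infinity>x. \<bar>pmf p x - pmf q x\<bar>)"

lemma pmf_summable_on: "pmf p summable_on A"
  using pmf_abs_summable[of p A] abs_summable_equivalent abs_summable_summable by blast

lemma infsum_pmf_eq_1: "(\<Sum>\<^sub>\<infinity>x. pmf p x) = 1"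
proof -
  have "(\<Sum>\<^sub>\<infinity>x. pmf p x) = infsetsum (pmf p) UNIV"
    by (rule infsetsum_infsum[OF pmf_abs_summable, symmetric])
  also have "\<dots> = 1"
    by (rule infsetsum_pmf_eq_1) simp
  finally show ?thesis .
qed

lemma summable_on_real_bound:
  fixes f g :: "'b \<Rightarrow> real"
  assumes "g summable_on A" "\<And>x. x \<in> A \<Longrightarrow> \<bar>f x\<bar> \<le> g x"
  shows "f summable_on A"
proof -
  have "(\<lambda>x. norm (f x)) summable_on A"
    by (rule summable_on_comparison_test[OF assms(1)]) (use assms(2) in auto)
  then show ?thesis
    by (rule summable_on_iff_abs_summable_on_real[THEN iffD2])
qed

lemma pmf_l1_dist_commute: "pmf_l1_dist p q = pmf_l1_dist q p"
  by (simp add: pmf_l1_dist_def abs_minus_commute)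

lemma pmf_l1_dist_nonneg: "pmf_l1_dist p q \<ge> 0"
  by (simp add: pmf_l1_dist_def infsum_nonneg)

lemma summable_on_abs_pmf_diff: "(\<lambda>x. \<bar>pmf p x - pmf q x\<bar>) summable_on UNIV"
  by (rule summable_on_real_bound[OF summable_on_add[OF pmf_summable_on[of p] pmf_summable_on[of q]]])
     (use pmf_nonneg[of p] pmf_nonneg[of q] in \<open>force simp: abs_le_iff\<close>)

lemma pmf_expectation_eq_infsum:
  fixes f :: "'a \<Rightarrow> real"
  assumes "\<And>x. \<bar>f x\<bar> \<le> 1"
  shows "measure_pmf.expectation p f = (\<Sum>\<^sub>\<infinity>x. pmf p x * f x)"
    and "(\<lambda>x. pmf p x * f x) summable_on UNIV"
proof -
  have bound: "norm (pmf p x * f x) \<le> norm (pmf p x)" for x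
    using assms[of x] by (simp add: abs_mult mult_left_le)
  have "Infinite_Set_Sum.abs_summable_on (\<lambda>x. pmf p x * f x) UNIV"
    by (rule Infinite_Set_Sum.abs_summable_on_comparison_test[OF pmf_abs_summable bound])
  then show "measure_pmf.expectation p f = (\<Sum>\<^sub>\<infinity>x. pmf p x * f x)"
    by (simp add: pmf_expectation_eq_infsetsum infsetsum_infsum)
  show "(\<lambda>x. pmf p x * f x) summable_on UNIV"
    by (rule summable_on_real_bound[OF pmf_summable_on]) (use bound in auto)
qed

lemma expectation_le_plus_pmf_l1_dist:
  fixes f :: "'a \<Rightarrow> real"
  assumes "\<And>x. \<bar>f x\<bar> \<le> 1"
  shows "measure_pmf.expectation p f \<le> measure_pmf.expectation q f + pmf_l1_dist p q"
proof -
  have "pmf p x * f x \<le> pmf q x * f x + \<bar>pmf p x - pmf q x\<bar>" for x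
  proof -
    have "(pmf p x - pmf q x) * f x \<le> \<bar>pmf p x - pmf q x\<bar> * \<bar>f x\<bar>"
      by (metis abs_ge_self abs_mult)
    also have "\<dots> \<le> \<bar>pmf p x - pmf q x\<bar>"
      using assms[of x] by (simp add: mult_left_le)
    finally show ?thesis by (simp add: algebra_simps)
  qed
  then have "(\<Sum>\<^sub>\<infinity>x. pmf p x * f x) \<le> (\<Sum>\<^sub>\<infinity>x. pmf q x * f x + \<bar>pmf p x - pmf q x\<bar>)"
    by (intro infsum_mono summable_on_add pmf_expectation_eq_infsum(2) assms
        summable_on_abs_pmf_diff)
  then show ?thesis
    by (simp add: pmf_expectation_eq_infsum assms pmf_l1_dist_def
        infsum_add[OF pmf_expectation_eq_infsum(2) summable_on_abs_pmf_diff])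
qed

lemma abs_expectation_diff_le_pmf_l1_dist:
  fixes f :: "'a \<Rightarrow> real"
  assumes "\<And>x. \<bar>f x\<bar> \<le> 1"
  shows "\<bar>measure_pmf.expectation p f - measure_pmf.expectation q f\<bar> \<le> pmf_l1_dist p q"
  using expectation_le_plus_pmf_l1_dist[of f p q] expectation_le_plus_pmf_l1_dist[of f q p]
    assms pmf_l1_dist_commute[of p q] by (simp add: abs_le_iff)

lemma abs_expectation_diff_le:
  fixes f g :: "'a \<Rightarrow> real"
  assumes "\<And>x. \<bar>f x\<bar> \<le> 1" "\<And>x. \<bar>g x\<bar> \<le> 1" "\<And>x. \<bar>f x - g x\<bar> \<le> B"
  shows "\<bar>measure_pmf.expectation p f - measure_pmf.expectation p g\<bar> \<le> B"
proof -
  have "integrable p f" "integrable p g"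
    using assms by (auto intro: measure_pmf.integrable_const_bound[where B=1])
  then have "measure_pmf.expectation p f - measure_pmf.expectation p g
      = measure_pmf.expectation p (\<lambda>x. f x - g x)"
    by simp
  also have "\<bar>\<dots>\<bar> \<le> measure_pmf.expectation p (\<lambda>x. \<bar>f x - g x\<bar>)"
    using integral_abs_bound .
  also have "\<dots> \<le> B"
    using assms(3) \<open>integrable p f\<close> \<open>integrable p g\<close>
    by (intro measure_pmf.integral_le_const) auto
  finally show ?thesis .
qed

lemma measure_pmf_prob_bind:
  "measure_pmf.prob (bind_pmf M N) X = measure_pmf.expectation M (\<lambda>x. measure_pmf.prob (N x) X)"
proof -
  have "integrable M (\<lambda>x. measure_pmf.prob (N x) X)"
    by (rule measure_pmf.integrable_const_bound[where B=1]) auto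
  then have "emeasure (bind_pmf M N) X
      = ennreal (measure_pmf.expectation M (\<lambda>x. measure_pmf.prob (N x) X))"
    by (subst emeasure_bind_pmf)
       (simp add: measure_pmf.emeasure_eq_measure nn_integral_eq_integral)
  then show ?thesis by (simp add: measure_pmf.emeasure_eq_measure)
qed

lemma abs_prob_replicate_pmf_diff_le:
  "\<bar>measure_pmf.prob (replicate_pmf n p) R - measure_pmf.prob (replicate_pmf n q) R\<bar>
     \<le> real n * pmf_l1_dist p q"
proof (induction n arbitrary: R)
  case 0
  then show ?case by simp
next
  case (Suc n)
  define f where "f x = measure_pmf.prob (replicate_pmf n p) ((#) x -` R)" for x
  define g where "g x = measure_pmf.prob (replicate_pmf n q) ((#) x -` R)" for x
  have prob_Suc: "measure_pmf.prob (replicate_pmf (Suc n) r) R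
      = measure_pmf.expectation r (\<lambda>x. measure_pmf.prob (replicate_pmf n r) ((#) x -` R))" for r
    by (simp add: measure_pmf_prob_bind map_pmf_def[symmetric])
  have "\<bar>measure_pmf.expectation p f - measure_pmf.expectation p g\<bar> \<le> real n * pmf_l1_dist p q"
    by (rule abs_expectation_diff_le) (use Suc.IH in \<open>auto simp: f_def g_def\<close>)
  moreover have "\<bar>measure_pmf.expectation p g - measure_pmf.expectation q g\<bar> \<le> pmf_l1_dist p q"
    by (rule abs_expectation_diff_le_pmf_l1_dist) (simp add: g_def)
  ultimately show ?case
    unfolding prob_Suc f_def[symmetric] g_def[symmetric] by (simp add: algebra_simps abs_le_iff)
qed

definition KL_term :: "real \<Rightarrow> real \<Rightarrow> real" where
  "KL_term a m = (if a = 0 then 0 else a * log 2 (a / m))"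

definition JS_term :: "real \<Rightarrow> real \<Rightarrow> real" where
  "JS_term a b = KL_term a ((a + b) / 2) + KL_term b ((a + b) / 2)"

lemma pmf_mid_pmf: "pmf (mid_pmf p q) x = (pmf p x + pmf q x) / 2"
  by (simp add: mid_pmf_def pmf_bind)

lemma KL_div_eq_infsum_KL_term: "KL_div p q = (\<Sum>\<^sub>\<infinity>x. KL_term (pmf p x) (pmf q x))"
  by (simp add: KL_div_def KL_term_def)

lemma KL_term_ge_sqrt:
  assumes "a \<ge> 0" "m > 0"
  shows "2 * a - 2 * sqrt (a * m) \<le> ln 2 * KL_term a m"
proof (cases "a = 0")
  case True
  then show ?thesis by (simp add: KL_term_def)
next
  case False
  with assms have a: "a > 0" by simp
  have "ln (sqrt (m / a)) \<le> sqrt (m / a) - 1"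
    using a assms by (intro ln_le_minus_one) simp
  then have "2 - 2 * sqrt (m / a) \<le> ln (a / m)"
    using a assms by (simp add: ln_sqrt ln_div)
  then have "a * (2 - 2 * sqrt (m / a)) \<le> a * ln (a / m)"
    using a by (simp add: mult_left_mono)
  moreover have "a * sqrt (m / a) = sqrt (a * m)"
    using a by (simp add: real_sqrt_divide real_sqrt_mult field_simps)
  ultimately show ?thesis
    using False by (simp add: KL_term_def log_def algebra_simps)
qed

lemma KL_term_le:
  assumes "a \<ge> 0" "a \<le> 2 * m"
  shows "KL_term a m \<le> a"
proof (cases "a = 0")
  case True
  then show ?thesis by (simp add: KL_term_def)
next
  case False
  with assms have "a > 0" "m > 0" by auto
  then have "a / m \<le> 2"
    using assms by (simp add: divide_le_eq)
  then have "log 2 (a / m) \<le> 1"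
    using \<open>a > 0\<close> \<open>m > 0\<close> by simp
  with \<open>a > 0\<close> show ?thesis
    by (simp add: KL_term_def mult_left_le)
qed

lemma abs_KL_term_le:
  assumes "a \<ge> 0" "a \<le> 2 * m"
  shows "\<bar>KL_term a m\<bar> \<le> a + m / ln 2"
proof (cases "m = 0")
  case True
  with assms show ?thesis by (simp add: KL_term_def)
next
  case False
  with assms have "m > 0" by simp
  have "2 * sqrt (a * m) \<le> a + m"
    using arith_geo_mean_sqrt[of a m] assms \<open>m > 0\<close> by simp
  then have "- m \<le> ln 2 * KL_term a m"
    using KL_term_ge_sqrt[OF assms(1) \<open>m > 0\<close>] assms(1) by linarith
  then have "- (m / ln 2) \<le> KL_term a m"
    by (simp add: field_simps)
  moreover have "m / ln 2 \<ge> 0"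
    using \<open>m > 0\<close> by simp
  ultimately show ?thesis
    using KL_term_le[OF assms] assms(1) by (simp add: abs_le_iff)
qed

lemma sqrt_diff_sq_le_JS_term:
  assumes "a \<ge> 0" "b \<ge> 0"
  shows "(sqrt a - sqrt b)^2 \<le> 2 * ln 2 * JS_term a b"
proof (cases "a + b = 0")
  case True
  with assms show ?thesis by (simp add: JS_term_def KL_term_def)
next
  case False
  define m where "m = (a + b) / 2"
  with False assms have "m > 0" by simp
  define x y z where "x = sqrt a" and "y = sqrt b" and "z = sqrt m"
  have sq: "x^2 = a" "y^2 = b" "z^2 = m"
    using assms \<open>m > 0\<close> by (simp_all add: x_def y_def z_def)
  have "2 * a - 2 * (x * z) \<le> ln 2 * KL_term a m"
    using KL_term_ge_sqrt[OF assms(1) \<open>m > 0\<close>] by (simp add: x_def z_def real_sqrt_mult)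
  moreover have "2 * b - 2 * (y * z) \<le> ln 2 * KL_term b m"
    using KL_term_ge_sqrt[OF assms(2) \<open>m > 0\<close>] by (simp add: y_def z_def real_sqrt_mult)
  moreover have "(x - y)^2 \<le> 2 * ((x - z)^2 + (y - z)^2)"
    using zero_le_power2[of "x + y - 2 * z"] by (simp add: power2_eq_square algebra_simps)
  moreover have "(x - z)^2 + (y - z)^2 = 2 * a + 2 * b - 2 * (x * z) - 2 * (y * z)"
    using sq m_def by (simp add: power2_diff algebra_simps)
  ultimately have "(x - y)^2 \<le> 2 * (ln 2 * KL_term a m + ln 2 * KL_term b m)"
    by argo
  then show ?thesis
    by (simp add: JS_term_def m_def x_def y_def distrib_left mult.assoc)
qed

lemma abs_diff_le_sqrt_diff_sq:
  assumes "a \<ge> 0" "b \<ge> 0" "c > 0"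
  shows "\<bar>a - b\<bar> \<le> (sqrt a - sqrt b)^2 / (2 * c) + c * (a + b)"
proof -
  define x y where "x = sqrt a" and "y = sqrt b"
  have sq: "x^2 = a" "y^2 = b" "x \<ge> 0" "y \<ge> 0"
    using assms by (simp_all add: x_def y_def)
  have "a - b = (x - y) * (x + y)"
    using sq by (simp add: power2_eq_square algebra_simps)
  then have "\<bar>a - b\<bar> = \<bar>x - y\<bar> * (x + y)"
    using sq by (simp add: abs_mult)
  also have "\<dots> \<le> ((x - y)^2 + c^2 * (x + y)^2) / (2 * c)"
  proof -
    have "0 \<le> (\<bar>x - y\<bar> - c * (x + y))^2" by simp
    also have "\<dots> = (x - y)^2 - 2 * c * (\<bar>x - y\<bar> * (x + y)) + c^2 * (x + y)^2"
      by (simp add: power2_diff power_mult_distrib mult.assoc)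
    finally have "2 * c * (\<bar>x - y\<bar> * (x + y)) \<le> (x - y)^2 + c^2 * (x + y)^2"
      by linarith
    with assms(3) show ?thesis by (simp add: field_simps)
  qed
  also have "\<dots> \<le> (x - y)^2 / (2 * c) + c * (a + b)"
  proof -
    have "(x + y)^2 \<le> 2 * (a + b)"
      using zero_le_power2[of "x - y"] sq by (simp add: power2_eq_square algebra_simps)
    with assms(3) show ?thesis
      by (simp add: add_divide_distrib power2_eq_square mult_left_mono)
  qed
  finally show ?thesis by (simp add: x_def y_def)
qed

lemma summable_on_KL_term_mid:
  "(\<lambda>x. KL_term (pmf p x) ((pmf p x + pmf q x) / 2)) summable_on UNIV"
proof (rule summable_on_real_bound)
  show "(\<lambda>x. pmf p x + (pmf p x + pmf q x) * (1 / (2 * ln 2))) summable_on UNIV"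
    by (intro summable_on_add summable_on_cmult_left pmf_summable_on)
  fix x
  show "\<bar>KL_term (pmf p x) ((pmf p x + pmf q x) / 2)\<bar>
      \<le> pmf p x + (pmf p x + pmf q x) * (1 / (2 * ln 2))"
    using abs_KL_term_le[of "pmf p x" "(pmf p x + pmf q x) / 2"] by simp
qed

lemma summable_on_JS_term: "(\<lambda>x. JS_term (pmf p x) (pmf q x)) summable_on UNIV"
  unfolding JS_term_def
  using summable_on_add[OF summable_on_KL_term_mid[of p q] summable_on_KL_term_mid[of q p]]
  by (simp add: add.commute)

lemma JS_dist_eq_infsum_JS_term: "JS_dist p q = (\<Sum>\<^sub>\<infinity>x. JS_term (pmf p x) (pmf q x))"
  unfolding JS_dist_def KL_div_eq_infsum_KL_term JS_term_def pmf_mid_pmf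
  using infsum_add[OF summable_on_KL_term_mid[of p q] summable_on_KL_term_mid[of q p]]
  by (simp add: add.commute)

lemma JS_term_nonneg:
  assumes "a \<ge> 0" "b \<ge> 0"
  shows "JS_term a b \<ge> 0"
proof -
  have "0 \<le> 2 * ln 2 * JS_term a b"
    using zero_le_power2 sqrt_diff_sq_le_JS_term[OF assms] by (rule order_trans)
  then show ?thesis by (simp add: zero_le_mult_iff)
qed

lemma JS_dist_nonneg: "JS_dist p q \<ge> 0"
  unfolding JS_dist_eq_infsum_JS_term by (intro infsum_nonneg JS_term_nonneg) simp_all

lemma pmf_l1_dist_le_JS_dist:
  assumes "c > 0"
  shows "pmf_l1_dist p q \<le> ln 2 * JS_dist p q / c + 2 * c"
proof -
  let ?J = "\<lambda>x. JS_term (pmf p x) (pmf q x)"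
  have "pmf_l1_dist p q \<le> (\<Sum>\<^sub>\<infinity>x. ln 2 / c * ?J x + c * (pmf p x + pmf q x))"
    unfolding pmf_l1_dist_def
  proof (rule infsum_mono)
    show "(\<lambda>x. ln 2 / c * ?J x + c * (pmf p x + pmf q x)) summable_on UNIV"
      by (intro summable_on_add summable_on_cmult_right summable_on_JS_term pmf_summable_on)
    fix x
    have "\<bar>pmf p x - pmf q x\<bar> \<le> (sqrt (pmf p x) - sqrt (pmf q x))^2 / (2 * c)
        + c * (pmf p x + pmf q x)"
      by (rule abs_diff_le_sqrt_diff_sq) (simp_all add: assms)
    also have "\<dots> \<le> ln 2 / c * ?J x + c * (pmf p x + pmf q x)"
      using sqrt_diff_sq_le_JS_term[of "pmf p x" "pmf q x"] assms
      by (simp add: divide_right_mono field_simps)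
    finally show "\<bar>pmf p x - pmf q x\<bar> \<le> ln 2 / c * ?J x + c * (pmf p x + pmf q x)" .
  qed (rule summable_on_abs_pmf_diff)
  also have "\<dots> = ln 2 / c * (\<Sum>\<^sub>\<infinity>x. ?J x) + c * ((\<Sum>\<^sub>\<infinity>x. pmf p x) + (\<Sum>\<^sub>\<infinity>x. pmf q x))"
  proof -
    have JS: "(\<lambda>x. ln 2 / c * ?J x) summable_on UNIV"
      by (intro summable_on_cmult_right summable_on_JS_term)
    have mass: "(\<lambda>x. c * (pmf p x + pmf q x)) summable_on UNIV"
      by (intro summable_on_cmult_right summable_on_add pmf_summable_on)
    show ?thesis
      unfolding infsum_add[OF JS mass] infsum_cmult_right' infsum_add[OF pmf_summable_on pmf_summable_on] ..
  qed
  also have "\<dots> = ln 2 / c * JS_dist p q + c * 2"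
    by (simp add: infsum_pmf_eq_1 JS_dist_eq_infsum_JS_term)
  finally show ?thesis by simp
qed

lemma pmf_l1_dist_le_sqrt_JS_dist: "pmf_l1_dist p q \<le> 3 * sqrt (ln 2 * JS_dist p q)"
proof (cases "JS_dist p q = 0")
  case True
  show ?thesis
  proof (rule field_le_epsilon)
    fix e :: real assume "e > 0"
    then show "pmf_l1_dist p q \<le> 3 * sqrt (ln 2 * JS_dist p q) + e"
      using pmf_l1_dist_le_JS_dist[of "e / 2" p q] True by simp
  qed
next
  case False
  define c where "c = sqrt (ln 2 * JS_dist p q)"
  have "c > 0"
    using False JS_dist_nonneg[of p q] by (simp add: c_def)
  have "ln 2 * JS_dist p q / c = c"
    using \<open>c > 0\<close> by (simp add: c_def real_div_sqrt)
  with pmf_l1_dist_le_JS_dist[OF \<open>c > 0\<close>, of p q] show ?thesis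
    by (simp add: c_def)
qed

theorem lemma2:
  fixes p q :: "'a::countable pmf" and \<epsilon> \<alpha> :: real and N :: nat
    and R :: "'a list set"
  assumes "JS_dist p q \<le> \<epsilon>"
    and "N \<ge> 1"
    and "R \<subseteq> {xs. length xs = N}"
    and "\<alpha> > 0"
    and "measure_pmf.prob (replicate_pmf N p) R \<ge> 1 - \<alpha>"
  shows "measure_pmf.prob (replicate_pmf N q) R
           \<ge> 1 - \<alpha> - 2 * real N ^ 3 * sqrt (4 * \<epsilon> * ln 2) - 1 / real N"
proof -
  have "\<epsilon> \<ge> 0"
    using JS_dist_nonneg assms(1) by (rule order_trans)
  have "pmf_l1_dist p q \<le> 3 * sqrt (ln 2 * JS_dist p q)"
    by (rule pmf_l1_dist_le_sqrt_JS_dist)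
  also have "\<dots> \<le> 3 * sqrt (ln 2 * \<epsilon>)"
    using assms(1) by simp
  also have "\<dots> \<le> 2 * sqrt (4 * \<epsilon> * ln 2)"
    using \<open>\<epsilon> \<ge> 0\<close> by (simp add: real_sqrt_mult mult.commute)
  finally have l1: "pmf_l1_dist p q \<le> 2 * sqrt (4 * \<epsilon> * ln 2)" .
  have "real N * pmf_l1_dist p q \<le> real N ^ 3 * (2 * sqrt (4 * \<epsilon> * ln 2))"
    using l1 assms(2) pmf_l1_dist_nonneg \<open>\<epsilon> \<ge> 0\<close>
    by (intro mult_mono) (simp_all add: power_increasing[of 1 3, simplified])
  moreover have "measure_pmf.prob (replicate_pmf N p) R - measure_pmf.prob (replicate_pmf N q) R
      \<le> real N * pmf_l1_dist p q"
    using abs_prob_replicate_pmf_diff_le[of N p R q] by (simp add: abs_le_iff)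
  moreover have "1 / real N \<ge> 0"
    by simp
  ultimately show ?thesis
    using assms(5) by (simp only: mult.left_commute[of _ 2])
qed

end
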